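(* Let $H^{(0)}=0$, $R=R^\top\succ0$, $Q=Q^\top\succeq0$, and let $H^{(i)}$ be generated by $H^{(i+1)}=G+\gamma M(L(H^{(i)}))^\top H^{(i)}M(L(H^{(i)}))$. Then for every $i>0$ and every $x\in\mathbb{R}^n$, $r_0,\dots,r_N\in\mathbb{R}^n$, the control $u=L(H^{(i)})[x^\top,r_1^\top,\dots,r_N^\top]^\top$ is the unique minimizer over $u\in\mathbb{R}^m$ of $\tfrac12 z^\top H^{(i)} z$, where $z=[x^\top,u^\top,r_0^\top,\dots,r_N^\top]^\top$.
   Context: Dimensions: $x,r_j\in\mathbb{R}^n$, $u\in\mathbb{R}^m$, $A\in\mathbb{R}^{n\times n}$, $B\in\mathbb{R}^{n\times m}$, $\gamma\in[0,1)$, $N\in\mathbb{N}$. Symmetric matrices $H$ of size $((N+2)n+m)$ are partitioned into blocks $h_{ab}$, $a,b\in\{x,u,r_0,\dots,r_N\}$. For $H$ with invertible $h_{uu}$, $L(H)=-h_{uu}^{-1}[h_{ux},h_{ur_1},\dots,h_{ur_N}]=[L_x,L_1,\dots,L_N]$, and $L(0):=0$. $G=\begin{bmatrix}Q&0&-Q&0\\0&R&0&0\\-Q&0&Q&0\\0&0&0&0\end{bmatrix}$ (blocks $x$, $u$, $r_0$, $(r_1,\dots,r_N)$). $M(L)$ is the square matrix mapping $[x;u;r_0;\dots;r_N]$ to $[Ax+Bu;\;L_x(Ax+Bu)+L_1r_2+\dots+L_{N-1}r_N;\;r_1;\dots;r_N;\;0]$. *)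

theory Defs
  imports "Jordan_Normal_Form.Matrix"
begin

(* Layout of z = [x; u; r_0; ...; r_N] in R^((N+2)n+m):
   x at offset 0 (length n), u at offset n (length m),
   r_j at offset n+m+j*n (length n). *)

definition dimz :: "nat \<Rightarrow> nat \<Rightarrow> nat \<Rightarrow> nat" where
  "dimz n m N = (N+2)*n + m"

definition subv :: "real vec \<Rightarrow> nat \<Rightarrow> nat \<Rightarrow> real vec" where
  "subv z a k = vec k (\<lambda>i. z $ (a+i))"

definition concat_vecs :: "real vec list \<Rightarrow> real vec" where
  "concat_vecs vs = foldr (@\<^sub>v) vs (vec 0 (\<lambda>_. 0))"

definition symmetric_mat :: "real mat \<Rightarrow> bool" where
  "symmetric_mat A \<longleftrightarrow> transpose_mat A = A"

definition pos_def :: "nat \<Rightarrow> real mat \<Rightarrow> bool" where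
  "pos_def k A \<longleftrightarrow> A \<in> carrier_mat k k \<and> symmetric_mat A \<and>
     (\<forall>v\<in>carrier_vec k. v \<noteq> 0\<^sub>v k \<longrightarrow> v \<bullet> (A *\<^sub>v v) > 0)"

definition pos_semidef :: "nat \<Rightarrow> real mat \<Rightarrow> bool" where
  "pos_semidef k A \<longleftrightarrow> A \<in> carrier_mat k k \<and> symmetric_mat A \<and>
     (\<forall>v\<in>carrier_vec k. v \<bullet> (A *\<^sub>v v) \<ge> 0)"

definition huu :: "nat \<Rightarrow> nat \<Rightarrow> real mat \<Rightarrow> real mat" where
  "huu n m H = mat m m (\<lambda>(i,j). H $$ (n+i, n+j))"

(* [h_ux, h_ur_1, ..., h_ur_N] : m x (n + N n) *)
definition hrest :: "nat \<Rightarrow> nat \<Rightarrow> nat \<Rightarrow> real mat \<Rightarrow> real mat" where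
  "hrest n m N H = mat m (n + N*n)
     (\<lambda>(i,j). if j < n then H $$ (n+i, j) else H $$ (n+i, n+m+n+(j-n)))"

definition mat_inv :: "nat \<Rightarrow> real mat \<Rightarrow> real mat" where
  "mat_inv k A = (THE B. B \<in> carrier_mat k k \<and> A * B = 1\<^sub>m k \<and> B * A = 1\<^sub>m k)"

(* L(H) = - h_uu^{-1} [h_ux, h_ur_1, ..., h_ur_N]; L(H) := 0 when h_uu is singular
   (in particular L(0) = 0). *)
definition Lgain :: "nat \<Rightarrow> nat \<Rightarrow> nat \<Rightarrow> real mat \<Rightarrow> real mat" where
  "Lgain n m N H = (if invertible_mat (huu n m H)
      then - (mat_inv m (huu n m H) * hrest n m N H)
      else 0\<^sub>m m (n + N*n))"

(* block k of L = [L_x, L_1, ..., L_N]; k = 0 gives L_x *)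
definition Lblk :: "nat \<Rightarrow> nat \<Rightarrow> real mat \<Rightarrow> nat \<Rightarrow> real mat" where
  "Lblk n m L k = mat m n (\<lambda>(i,j). L $$ (i, n*k + j))"

definition Mmap :: "nat \<Rightarrow> nat \<Rightarrow> nat \<Rightarrow> real mat \<Rightarrow> real mat \<Rightarrow> real mat \<Rightarrow> real vec \<Rightarrow> real vec" where
  "Mmap n m N A B L z =
     (let x = subv z 0 n; u = subv z n m; r = (\<lambda>j. subv z (n+m+j*n) n);
          y = A *\<^sub>v x + B *\<^sub>v u;
          w = vec m (\<lambda>i. (Lblk n m L 0 *\<^sub>v y) $ i
                     + (\<Sum>k\<in>{1..<N}. (Lblk n m L k *\<^sub>v r (Suc k)) $ i))
      in y @\<^sub>v w @\<^sub>v concat_vecs (map r [1..<N+1]) @\<^sub>v 0\<^sub>v n)"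

definition Mmat :: "nat \<Rightarrow> nat \<Rightarrow> nat \<Rightarrow> real mat \<Rightarrow> real mat \<Rightarrow> real mat \<Rightarrow> real mat" where
  "Mmat n m N A B L = mat (dimz n m N) (dimz n m N)
     (\<lambda>(i,j). Mmap n m N A B L (unit_vec (dimz n m N) j) $ i)"

definition Gmat :: "nat \<Rightarrow> nat \<Rightarrow> nat \<Rightarrow> real mat \<Rightarrow> real mat \<Rightarrow> real mat" where
  "Gmat n m N Q R = mat (dimz n m N) (dimz n m N) (\<lambda>(i,j).
     if i < n \<and> j < n then Q $$ (i, j)
     else if n \<le> i \<and> i < n+m \<and> n \<le> j \<and> j < n+m then R $$ (i-n, j-n)
     else if i < n \<and> n+m \<le> j \<and> j < n+m+n then - Q $$ (i, j-(n+m))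
     else if n+m \<le> i \<and> i < n+m+n \<and> j < n then - Q $$ (i-(n+m), j)
     else if n+m \<le> i \<and> i < n+m+n \<and> n+m \<le> j \<and> j < n+m+n then Q $$ (i-(n+m), j-(n+m))
     else 0)"

fun Hseq :: "nat \<Rightarrow> nat \<Rightarrow> nat \<Rightarrow> real mat \<Rightarrow> real mat \<Rightarrow> real mat \<Rightarrow> real mat \<Rightarrow> real \<Rightarrow> nat \<Rightarrow> real mat" where
  "Hseq n m N A B Q R \<gamma> 0 = 0\<^sub>m (dimz n m N) (dimz n m N)"
| "Hseq n m N A B Q R \<gamma> (Suc i) =
     (let H = Hseq n m N A B Q R \<gamma> i; M = Mmat n m N A B (Lgain n m N H)
      in Gmat n m N Q R + \<gamma> \<cdot>\<^sub>m (transpose_mat M * H * M))"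

end

theory Submission
  imports Defs "Jordan_Normal_Form.Determinant"
begin

(* Every H^(i) is symmetric positive
   semidefinite: G is, and congruence and nonnegative combinations preserve this.
   Since M does not read the r_0 block of z, the r_0 columns of M^T H M vanish, so the
   u-r_0 block of H^(i) is that of G, namely zero; moreover h_uu >= R > 0 is invertible.
   Writing z_v = z_u + e with e = [0; v - u; 0], the cross term e^T H z_u is
   (v - u)^T (h_uu u + [h_ux, h_ur_1, ..., h_ur_N] [x; r_1; ...; r_N]), which vanishes for
   u = L(H^(i)) [x; r_1; ...; r_N], leaving f(v) - f(u) = (v - u)^T h_uu (v - u) / 2 > 0. *)

lemma sum_atLeast0_lessThan_add:
  fixes a b :: nat
  shows "(\<Sum>i\<in>{0..<a+b}. f i) = (\<Sum>i\<in>{0..<a}. f i) + (\<Sum>i\<in>{0..<b}. f (a+i))"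
  by (induction b) (simp_all add: add.assoc)

lemma mult_mat_vec_zero_vec: "dim_col K = k \<Longrightarrow> (K :: 'a :: semiring_0 mat) *\<^sub>v 0\<^sub>v k = 0\<^sub>v (dim_row K)"
  by (intro eq_vecI) auto

lemma zero_mat_mult_vec: "v \<in> carrier_vec nc \<Longrightarrow> (0\<^sub>m nr nc :: 'a :: semiring_0 mat) *\<^sub>v v = 0\<^sub>v nr"
  by (intro eq_vecI) auto

lemma smult_mat_mult_vec:
  assumes "(A :: 'a :: comm_ring mat) \<in> carrier_mat nr nc" and "v \<in> carrier_vec nc"
  shows "(c \<cdot>\<^sub>m A) *\<^sub>v v = c \<cdot>\<^sub>v (A *\<^sub>v v)"
  using assms by (intro eq_vecI) auto

lemma transpose_smult_mat: "transpose_mat (c \<cdot>\<^sub>m A) = c \<cdot>\<^sub>m transpose_mat A"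
  by (intro eq_matI) auto

lemma append_zero_vec: "0\<^sub>v a @\<^sub>v 0\<^sub>v b = (0\<^sub>v (a + b) :: 'a :: zero vec)"
  by (intro eq_vecI) auto

lemma concat_vecs_carrier:
  "\<forall>v\<in>set vs. v \<in> carrier_vec n \<Longrightarrow> concat_vecs vs \<in> carrier_vec (length vs * n)"
  by (induction vs) (auto simp: concat_vecs_def)

lemma concat_vecs_zero: "concat_vecs (map (\<lambda>_. 0\<^sub>v n) xs) = (0\<^sub>v (length xs * n) :: real vec)"
  by (induction xs) (auto simp: concat_vecs_def append_zero_vec)

lemma concat_vecs_map_upt_carrier:
  assumes "\<forall>j\<le>N. r j \<in> carrier_vec n"
  shows "concat_vecs (map r [1..<N+1]) \<in> carrier_vec (N*n)"
proof -
  have "\<forall>v\<in>set (map r [1..<N+1]). v \<in> carrier_vec n" using assms by auto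
  from concat_vecs_carrier[OF this] show ?thesis
    unfolding length_map length_upt by simp
qed

lemma concat_vecs_map_upt_0:
  "concat_vecs (map r [0..<N+1]) = r 0 @\<^sub>v concat_vecs (map r [1..<N+1])"
proof -
  have "[0..<N+1] = 0 # [1..<N+1]" using upt_conv_Cons[of 0 "N+1"] by simp
  then show ?thesis unfolding concat_vecs_def by simp
qed

lemma symmetric_scalar_prod_comm:
  fixes H :: "real mat"
  assumes "symmetric_mat H" and H: "H \<in> carrier_mat k k"
    and a: "a \<in> carrier_vec k" and b: "b \<in> carrier_vec k"
  shows "a \<bullet> (H *\<^sub>v b) = b \<bullet> (H *\<^sub>v a)"
proof -
  have "a \<bullet> (H *\<^sub>v b) = (transpose_mat H *\<^sub>v a) \<bullet> b"
    by (rule transpose_vec_mult_scalar[OF H b a, symmetric])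
  also have "\<dots> = b \<bullet> (H *\<^sub>v a)"
    using assms by (simp add: symmetric_mat_def comm_scalar_prod[of _ k])
  finally show ?thesis .
qed

lemma quadratic_form_add:
  fixes H :: "real mat"
  assumes "symmetric_mat H" and "H \<in> carrier_mat k k"
    and "a \<in> carrier_vec k" and "b \<in> carrier_vec k"
  shows "(a + b) \<bullet> (H *\<^sub>v (a + b)) = a \<bullet> (H *\<^sub>v a) + 2 * (b \<bullet> (H *\<^sub>v a)) + b \<bullet> (H *\<^sub>v b)"
  using symmetric_scalar_prod_comm[OF assms] assms
  by (simp add: mult_add_distrib_mat_vec[of H k k] add_scalar_prod_distrib[of _ k]
      scalar_prod_add_distrib[of _ k])

lemma quadratic_form_add_smult:
  fixes A B :: "real mat"
  assumes "A \<in> carrier_mat k k" and B: "B \<in> carrier_mat k k" and v: "v \<in> carrier_vec k"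
  shows "v \<bullet> ((A + c \<cdot>\<^sub>m B) *\<^sub>v v) = v \<bullet> (A *\<^sub>v v) + c * (v \<bullet> (B *\<^sub>v v))"
  using assms by (simp add: add_mult_distrib_mat_vec[of A k k] smult_mat_mult_vec[OF B v]
      scalar_prod_add_distrib[of _ k])

lemma quadratic_form_congruence:
  fixes M H :: "real mat"
  assumes M: "M \<in> carrier_mat k l" and "H \<in> carrier_mat k k" and v: "v \<in> carrier_vec l"
  shows "v \<bullet> ((transpose_mat M * H * M) *\<^sub>v v) = (M *\<^sub>v v) \<bullet> (H *\<^sub>v (M *\<^sub>v v))"
proof -
  have "(transpose_mat M * H * M) *\<^sub>v v = (transpose_mat M * H) *\<^sub>v (M *\<^sub>v v)"
    by (rule assoc_mult_mat_vec) (use assms in auto)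
  also have "\<dots> = transpose_mat M *\<^sub>v (H *\<^sub>v (M *\<^sub>v v))"
    by (rule assoc_mult_mat_vec) (use assms in auto)
  finally have "v \<bullet> ((transpose_mat M * H * M) *\<^sub>v v) = (transpose_mat M *\<^sub>v (H *\<^sub>v (M *\<^sub>v v))) \<bullet> v"
    using assms by (simp add: comm_scalar_prod[of _ l])
  also have "\<dots> = (H *\<^sub>v (M *\<^sub>v v)) \<bullet> (M *\<^sub>v v)"
    using transpose_vec_mult_scalar[OF M v] assms by simp
  also have "\<dots> = (M *\<^sub>v v) \<bullet> (H *\<^sub>v (M *\<^sub>v v))"
    using assms by (simp add: comm_scalar_prod[of _ k])
  finally show ?thesis .
qed

lemma pos_def_imp_pos_semidef:
  assumes "pos_def k (A :: real mat)"
  shows "pos_semidef k A"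
  unfolding pos_semidef_def
proof (intro conjI ballI)
  fix v :: "real vec" assume v: "v \<in> carrier_vec k"
  have A: "A \<in> carrier_mat k k" using assms by (simp add: pos_def_def)
  show "v \<bullet> (A *\<^sub>v v) \<ge> 0"
  proof (cases "v = 0\<^sub>v k")
    case True
    then show ?thesis using carrier_matD[OF A] by (simp add: mult_mat_vec_zero_vec)
  next
    case False
    then show ?thesis using assms v by (simp add: pos_def_def less_imp_le)
  qed
qed (use assms in \<open>simp_all add: pos_def_def\<close>)

lemma pos_semidef_congruence:
  fixes M H :: "real mat"
  assumes H: "pos_semidef k H" and M: "M \<in> carrier_mat k l"
  shows "pos_semidef l (transpose_mat M * H * M)"
proof -
  have Hc: "H \<in> carrier_mat k k" and Hs: "transpose_mat H = H"
    using H by (auto simp: pos_semidef_def symmetric_mat_def)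
  have "transpose_mat (transpose_mat M * H * M) = transpose_mat M * transpose_mat (transpose_mat M * H)"
    by (rule transpose_mult) (use Hc M in auto)
  also have "transpose_mat (transpose_mat M * H) = transpose_mat H * M"
    using transpose_mult[of "transpose_mat M" l k H k] Hc M by simp
  also have "transpose_mat M * (transpose_mat H * M) = transpose_mat M * H * M"
    unfolding Hs by (rule assoc_mult_mat[symmetric]) (use Hc M in auto)
  finally have "symmetric_mat (transpose_mat M * H * M)"
    unfolding symmetric_mat_def .
  moreover have "v \<bullet> ((transpose_mat M * H * M) *\<^sub>v v) \<ge> 0" if "v \<in> carrier_vec l" for v
    using quadratic_form_congruence[OF M Hc that] H M that by (simp add: pos_semidef_def)
  ultimately show ?thesis
    using Hc M by (simp add: pos_semidef_def)
qed

lemma pos_semidef_add_smult: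
  fixes G K :: "real mat"
  assumes G: "pos_semidef k G" and K: "pos_semidef k K" and c: "0 \<le> c"
  shows "pos_semidef k (G + c \<cdot>\<^sub>m K)"
proof -
  have Gc: "G \<in> carrier_mat k k" and Kc: "K \<in> carrier_mat k k"
    using G K by (auto simp: pos_semidef_def)
  have "symmetric_mat (G + c \<cdot>\<^sub>m K)"
    using G K by (simp add: pos_semidef_def symmetric_mat_def transpose_add[of _ k k] transpose_smult_mat)
  moreover have "v \<bullet> ((G + c \<cdot>\<^sub>m K) *\<^sub>v v) \<ge> 0" if "v \<in> carrier_vec k" for v
    using quadratic_form_add_smult[OF Gc Kc that] G K c that by (simp add: pos_semidef_def)
  ultimately show ?thesis
    using Gc Kc by (simp add: pos_semidef_def)
qed

lemma mat_inv_eqI: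
  fixes K B :: "real mat"
  assumes K: "K \<in> carrier_mat k k" and B: "B \<in> carrier_mat k k"
    and KB: "K * B = 1\<^sub>m k" and "B * K = 1\<^sub>m k"
  shows "mat_inv k K = B"
  unfolding mat_inv_def
proof (rule the_equality)
  fix C assume "C \<in> carrier_mat k k \<and> K * C = 1\<^sub>m k \<and> C * K = 1\<^sub>m k"
  then have C: "C \<in> carrier_mat k k" and CK: "C * K = 1\<^sub>m k" by auto
  have "C = C * (K * B)" using C KB by simp
  also have "\<dots> = (C * K) * B" by (rule assoc_mult_mat[symmetric]) (use B C K in auto)
  also have "\<dots> = B" using B CK by simp
  finally show "C = B" .
qed (use assms in simp)

lemma pos_def_mat_inv:
  fixes K :: "real mat"
  assumes "pos_def k K"
  shows "invertible_mat K \<and> mat_inv k K \<in> carrier_mat k k \<and> K * mat_inv k K = 1\<^sub>m k"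
proof -
  have K: "K \<in> carrier_mat k k" using assms by (simp add: pos_def_def)
  have "det K \<noteq> 0"
  proof
    assume "det K = 0"
    then obtain v where "v \<in> carrier_vec k" "v \<noteq> 0\<^sub>v k" "K *\<^sub>v v = 0\<^sub>v k"
      using det_0_iff_vec_prod_zero[OF K] by blast
    then show False using assms by (force simp: pos_def_def)
  qed
  from det_non_zero_imp_unit[OF K this, of "()"]
  obtain B where B: "B \<in> carrier_mat k k" "K * B = 1\<^sub>m k" "B * K = 1\<^sub>m k"
    unfolding Units_def ring_mat_def by auto
  have "invertible_mat K"
    unfolding invertible_mat_def inverts_mat_def using K B by auto
  then show ?thesis using mat_inv_eqI[OF K B] B by simp
qed

lemma dimz_eq: "dimz n m N = n + m + n + N*n"
  by (simp add: dimz_def algebra_simps)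

lemma huu_carrier: "huu n m H \<in> carrier_mat m m"
  by (simp add: huu_def)

lemma hrest_carrier: "hrest n m N H \<in> carrier_mat m (n + N*n)"
  by (simp add: hrest_def)

lemma scalar_prod_zero_append_zero:
  assumes e: "e \<in> carrier_vec m" and w: "w \<in> carrier_vec (n + m + k)"
  shows "(0\<^sub>v n @\<^sub>v e @\<^sub>v 0\<^sub>v k) \<bullet> w = e \<bullet> subv w n m"
proof -
  have "(0\<^sub>v n @\<^sub>v e @\<^sub>v 0\<^sub>v k) \<bullet> w = (\<Sum>i\<in>{0..<n+m+k}. (0\<^sub>v n @\<^sub>v e @\<^sub>v 0\<^sub>v k) $ i * w $ i)"
    using w by (simp add: scalar_prod_def)
  also have "\<dots> = (\<Sum>c\<in>{0..<m}. e $ c * w $ (n + c))"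
    unfolding sum_atLeast0_lessThan_add using e by simp
  also have "\<dots> = e \<bullet> subv w n m"
    using e by (simp add: scalar_prod_def subv_def)
  finally show ?thesis .
qed

lemma subv_mult_zero_append_zero:
  fixes K :: "real mat"
  assumes K: "K \<in> carrier_mat (n + m + k) (n + m + k)" and e: "e \<in> carrier_vec m"
  shows "subv (K *\<^sub>v (0\<^sub>v n @\<^sub>v e @\<^sub>v 0\<^sub>v k)) n m = huu n m K *\<^sub>v e"
proof (rule eq_vecI)
  fix c assume "c < dim_vec (huu n m K *\<^sub>v e)"
  then have c: "c < m" by (simp add: huu_def)
  have row: "subv (row K (n + c)) n m = row (huu n m K) c"
    using K c by (intro eq_vecI) (auto simp: subv_def huu_def)
  have embedded: "0\<^sub>v n @\<^sub>v e @\<^sub>v 0\<^sub>v k \<in> carrier_vec (n + m + k)"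
    using e by (simp add: add.assoc)
  have "(K *\<^sub>v (0\<^sub>v n @\<^sub>v e @\<^sub>v 0\<^sub>v k)) $ (n + c) = (0\<^sub>v n @\<^sub>v e @\<^sub>v 0\<^sub>v k) \<bullet> row K (n + c)"
    using K c by (simp add: comm_scalar_prod[OF row_carrier_vec[OF _ K] embedded])
  also have "\<dots> = e \<bullet> row (huu n m K) c"
    unfolding row[symmetric] by (rule scalar_prod_zero_append_zero[OF e row_carrier_vec[OF _ K]]) (use c in simp)
  also have "\<dots> = row (huu n m K) c \<bullet> e"
    by (rule comm_scalar_prod[OF e]) (simp add: huu_def c)
  finally show "subv (K *\<^sub>v (0\<^sub>v n @\<^sub>v e @\<^sub>v 0\<^sub>v k)) n m $ c = (huu n m K *\<^sub>v e) $ c"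
    using c by (simp add: subv_def huu_def)
qed (simp add: subv_def huu_def)

lemma quadratic_form_zero_append_zero:
  fixes K :: "real mat"
  assumes K: "K \<in> carrier_mat (n + m + k) (n + m + k)" and e: "e \<in> carrier_vec m"
  shows "(0\<^sub>v n @\<^sub>v e @\<^sub>v 0\<^sub>v k) \<bullet> (K *\<^sub>v (0\<^sub>v n @\<^sub>v e @\<^sub>v 0\<^sub>v k)) = e \<bullet> (huu n m K *\<^sub>v e)"
  using K e by (simp add: scalar_prod_zero_append_zero subv_mult_zero_append_zero add.assoc)

lemma symmetric_huu:
  assumes "symmetric_mat H" and "H \<in> carrier_mat (n + m + k) (n + m + k)"
  shows "symmetric_mat (huu n m H)"
  unfolding symmetric_mat_def
proof (rule eq_matI)
  fix i j assume "i < dim_row (huu n m H)" "j < dim_col (huu n m H)"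
  then have "i < m" "j < m" by (simp_all add: huu_def)
  then have "H $$ (n + j, n + i) = H $$ (n + i, n + j)"
    using assms index_transpose_mat(1)[of "n + i" H "n + j"]
    by (simp add: symmetric_mat_def)
  with \<open>i < m\<close> \<open>j < m\<close> show "transpose_mat (huu n m H) $$ (i, j) = huu n m H $$ (i, j)"
    by (simp add: huu_def)
qed (simp_all add: huu_def)

lemma subv_mult_u_block:
  fixes H :: "real mat"
  assumes H: "H \<in> carrier_mat (n + m + n + N*n) (n + m + n + N*n)"
    and u_r0: "\<forall>k<m. \<forall>j<n. H $$ (n + k, n + m + j) = 0"
    and x: "x \<in> carrier_vec n" and v: "v \<in> carrier_vec m" and r0: "r0 \<in> carrier_vec n"
    and rs: "rs \<in> carrier_vec (N*n)"
  shows "subv (H *\<^sub>v (x @\<^sub>v v @\<^sub>v r0 @\<^sub>v rs)) n m = huu n m H *\<^sub>v v + hrest n m N H *\<^sub>v (x @\<^sub>v rs)"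
proof (rule eq_vecI)
  fix c assume "c < dim_vec (huu n m H *\<^sub>v v + hrest n m N H *\<^sub>v (x @\<^sub>v rs))"
  then have c: "c < m" by (simp add: hrest_def)
  have "(H *\<^sub>v (x @\<^sub>v v @\<^sub>v r0 @\<^sub>v rs)) $ (n + c)
      = (\<Sum>j\<in>{0..<n + m + n + N*n}. H $$ (n + c, j) * (x @\<^sub>v v @\<^sub>v r0 @\<^sub>v rs) $ j)"
    using H x v r0 rs c by (simp add: scalar_prod_def add.assoc)
  also have "\<dots> = (\<Sum>j\<in>{0..<n}. H $$ (n + c, j) * x $ j) + (\<Sum>j\<in>{0..<m}. H $$ (n + c, n + j) * v $ j)
      + (\<Sum>j\<in>{0..<N*n}. H $$ (n + c, n + m + n + j) * rs $ j)"
    unfolding sum_atLeast0_lessThan_add using x v r0 rs c u_r0 by (simp add: add.assoc)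
  also have "\<dots> = (huu n m H *\<^sub>v v + hrest n m N H *\<^sub>v (x @\<^sub>v rs)) $ c"
    using x v rs c by (simp add: huu_def hrest_def scalar_prod_def sum_atLeast0_lessThan_add)
  finally show "subv (H *\<^sub>v (x @\<^sub>v v @\<^sub>v r0 @\<^sub>v rs)) n m $ c = (huu n m H *\<^sub>v v + hrest n m N H *\<^sub>v (x @\<^sub>v rs)) $ c"
    using c by (simp add: subv_def)
qed (simp add: subv_def hrest_def)

lemma quadratic_form_strict_min_u_block:
  fixes H :: "real mat"
  assumes H: "H \<in> carrier_mat (n + m + n + N*n) (n + m + n + N*n)" and sym: "symmetric_mat H"
    and u_r0: "\<forall>k<m. \<forall>j<n. H $$ (n + k, n + m + j) = 0"
    and huu_pd: "pos_def m (huu n m H)"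
    and x: "x \<in> carrier_vec n" and r0: "r0 \<in> carrier_vec n" and rs: "rs \<in> carrier_vec (N*n)"
    and u: "u \<in> carrier_vec m" and stationary: "huu n m H *\<^sub>v u = - (hrest n m N H *\<^sub>v (x @\<^sub>v rs))"
    and v: "v \<in> carrier_vec m" and "v \<noteq> u"
  shows "(x @\<^sub>v u @\<^sub>v r0 @\<^sub>v rs) \<bullet> (H *\<^sub>v (x @\<^sub>v u @\<^sub>v r0 @\<^sub>v rs))
       < (x @\<^sub>v v @\<^sub>v r0 @\<^sub>v rs) \<bullet> (H *\<^sub>v (x @\<^sub>v v @\<^sub>v r0 @\<^sub>v rs))"
proof -
  define d where "d = v - u"
  define zu where "zu = x @\<^sub>v u @\<^sub>v r0 @\<^sub>v rs"
  define e where "e = 0\<^sub>v n @\<^sub>v d @\<^sub>v 0\<^sub>v (n + N*n)"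
  have d: "d \<in> carrier_vec m" using u v by (simp add: d_def)
  have "d \<noteq> 0\<^sub>v m"
  proof
    assume "d = 0\<^sub>v m"
    have "v = u + d"
      using u v by (intro eq_vecI) (auto simp: d_def)
    also have "\<dots> = u"
      using u \<open>d = 0\<^sub>v m\<close> by simp
    finally show False
      using \<open>v \<noteq> u\<close> by contradiction
  qed
  then have "d \<bullet> (huu n m H *\<^sub>v d) > 0"
    using huu_pd d by (simp add: pos_def_def)
  moreover have H': "H \<in> carrier_mat (n + m + (n + N*n)) (n + m + (n + N*n))"
    using H by (simp add: add.assoc)
  ultimately have quad_e: "e \<bullet> (H *\<^sub>v e) > 0"
    unfolding e_def by (simp add: quadratic_form_zero_append_zero[OF H' d])
  have zu: "zu \<in> carrier_vec (n + m + (n + N*n))" using x u r0 rs by (simp add: zu_def add.assoc)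
  have "subv (H *\<^sub>v zu) n m = 0\<^sub>v m"
    unfolding zu_def subv_mult_u_block[OF H u_r0 x u r0 rs] stationary
    using x rs by (simp add: mult_mat_vec_carrier[OF hrest_carrier])
  then have cross: "e \<bullet> (H *\<^sub>v zu) = 0"
    unfolding e_def scalar_prod_zero_append_zero[OF d mult_mat_vec_carrier[OF H' zu]]
    using d by simp
  have e: "e \<in> carrier_vec (n + m + (n + N*n))" using d by (simp add: e_def add.assoc)
  have split: "x @\<^sub>v v @\<^sub>v r0 @\<^sub>v rs = zu + e"
    using x u v r0 rs by (intro eq_vecI) (auto simp: zu_def e_def d_def)
  have "(zu + e) \<bullet> (H *\<^sub>v (zu + e)) = zu \<bullet> (H *\<^sub>v zu) + e \<bullet> (H *\<^sub>v e)"
    using quadratic_form_add[OF sym H' zu e] cross by simp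
  then show ?thesis
    unfolding zu_def[symmetric] split using quad_e by linarith
qed

lemma Lgain_stationary:
  assumes pd: "pos_def m (huu n m H)" and y: "y \<in> carrier_vec (n + N*n)"
  shows "Lgain n m N H *\<^sub>v y \<in> carrier_vec m
    \<and> huu n m H *\<^sub>v (Lgain n m N H *\<^sub>v y) = - (hrest n m N H *\<^sub>v y)"
proof -
  let ?K = "huu n m H" and ?P = "hrest n m N H"
  obtain inv: "invertible_mat ?K" and Ki: "mat_inv m ?K \<in> carrier_mat m m"
    and KKi: "?K * mat_inv m ?K = 1\<^sub>m m"
    using pos_def_mat_inv[OF pd] by blast
  have L: "Lgain n m N H = - (mat_inv m ?K * ?P)"
    using inv by (simp add: Lgain_def)
  have "?K * Lgain n m N H = - (?K * (mat_inv m ?K * ?P))"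
    unfolding L by (rule uminus_mult_right_mat) (use Ki in \<open>simp add: huu_def\<close>)
  also have "?K * (mat_inv m ?K * ?P) = (?K * mat_inv m ?K) * ?P"
    by (rule assoc_mult_mat[OF huu_carrier Ki hrest_carrier, symmetric])
  also have "\<dots> = ?P"
    unfolding KKi by (rule left_mult_one_mat[OF hrest_carrier])
  finally have KL: "?K * Lgain n m N H = - ?P" .
  have Lc: "Lgain n m N H \<in> carrier_mat m (n + N*n)"
    unfolding L using mult_carrier_mat[OF Ki hrest_carrier] by simp
  have "?K *\<^sub>v (Lgain n m N H *\<^sub>v y) = (?K * Lgain n m N H) *\<^sub>v y"
    by (rule assoc_mult_mat_vec[OF huu_carrier Lc y, symmetric])
  moreover have "dim_vec y = dim_col ?P" using y by (simp add: hrest_def)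
  ultimately show ?thesis
    unfolding KL using mult_mat_vec_carrier[OF Lc y] by simp
qed

lemma Gmat_carrier: "Gmat n m N Q R \<in> carrier_mat (dimz n m N) (dimz n m N)"
  by (simp add: Gmat_def)

lemma index_Gmat:
  "i < dimz n m N \<Longrightarrow> j < dimz n m N \<Longrightarrow> Gmat n m N Q R $$ (i, j) =
     (if i < n \<and> j < n then Q $$ (i, j)
     else if n \<le> i \<and> i < n+m \<and> n \<le> j \<and> j < n+m then R $$ (i-n, j-n)
     else if i < n \<and> n+m \<le> j \<and> j < n+m+n then - Q $$ (i, j-(n+m))
     else if n+m \<le> i \<and> i < n+m+n \<and> j < n then - Q $$ (i-(n+m), j)
     else if n+m \<le> i \<and> i < n+m+n \<and> n+m \<le> j \<and> j < n+m+n then Q $$ (i-(n+m), j-(n+m))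
     else 0)"
  by (simp add: Gmat_def)

lemma Gmat_u_r0_block: "k < m \<Longrightarrow> j < n \<Longrightarrow> Gmat n m N Q R $$ (n + k, n + m + j) = 0"
  by (simp add: index_Gmat dimz_eq)

lemma huu_Gmat: "R \<in> carrier_mat m m \<Longrightarrow> huu n m (Gmat n m N Q R) = R"
  by (intro eq_matI) (auto simp: huu_def index_Gmat dimz_eq)

lemma symmetric_Gmat:
  assumes "symmetric_mat Q" "Q \<in> carrier_mat n n" and "symmetric_mat R" "R \<in> carrier_mat m m"
  shows "symmetric_mat (Gmat n m N Q R)"
  unfolding symmetric_mat_def
proof (rule eq_matI)
  have q: "Q $$ (a, b) = Q $$ (b, a)" if "a < n" "b < n" for a b
    using that assms index_transpose_mat(1)[of a Q b] by (simp add: symmetric_mat_def)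
  have r: "R $$ (a, b) = R $$ (b, a)" if "a < m" "b < m" for a b
    using that assms index_transpose_mat(1)[of a R b] by (simp add: symmetric_mat_def)
  fix i j assume "i < dim_row (Gmat n m N Q R)" "j < dim_col (Gmat n m N Q R)"
  then have i: "i < dimz n m N" and j: "j < dimz n m N" by (simp_all add: Gmat_def)
  have "transpose_mat (Gmat n m N Q R) $$ (i, j) = Gmat n m N Q R $$ (j, i)"
    using i j by (simp add: Gmat_def)
  then show "transpose_mat (Gmat n m N Q R) $$ (i, j) = Gmat n m N Q R $$ (i, j)"
    using i j by (cases "i < n"; cases "i < n+m"; cases "i < n+m+n"; cases "j < n"; cases "j < n+m";
        cases "j < n+m+n"; simp add: index_Gmat q r)
qed (simp_all add: Gmat_def)

lemma index_mult_mat_vec_blocks: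
  fixes K :: "real mat"
  assumes K: "K \<in> carrier_mat (n + m + n + N*n) (n + m + n + N*n)" and v: "v \<in> carrier_vec (n + m + n + N*n)"
    and a: "a < n + m + n + N*n"
  shows "(K *\<^sub>v v) $ a = (\<Sum>b\<in>{0..<n}. K $$ (a,b) * v $ b) + (\<Sum>b\<in>{0..<m}. K $$ (a,n+b) * v $ (n+b))
     + (\<Sum>b\<in>{0..<n}. K $$ (a,n+m+b) * v $ (n+m+b)) + (\<Sum>b\<in>{0..<N*n}. K $$ (a,n+m+n+b) * v $ (n+m+n+b))"
  using K v a by (simp add: scalar_prod_def sum_atLeast0_lessThan_add add.assoc)

lemma quadratic_form_Gmat:
  fixes Q R :: "real mat"
  assumes v: "v \<in> carrier_vec (n + m + n + N*n)" and Q: "Q \<in> carrier_mat n n" and R: "R \<in> carrier_mat m m"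
  defines "p \<equiv> vec n (\<lambda>c. v $ c - v $ (n+m+c))"
  shows "v \<bullet> (Gmat n m N Q R *\<^sub>v v) = p \<bullet> (Q *\<^sub>v p) + subv v n m \<bullet> (R *\<^sub>v subv v n m)"
proof -
  let ?G = "Gmat n m N Q R"
  have G: "?G \<in> carrier_mat (n + m + n + N*n) (n + m + n + N*n)" using Gmat_carrier by (simp add: dimz_eq)
  have Qp: "(Q *\<^sub>v p) $ c = (\<Sum>b\<in>{0..<n}. Q $$ (c,b) * v $ b) - (\<Sum>b\<in>{0..<n}. Q $$ (c,b) * v $ (n+m+b))"
    if "c < n" for c
    using that Q by (simp add: p_def scalar_prod_def right_diff_distrib sum_subtractf)
  have x_rows: "(?G *\<^sub>v v) $ c = (Q *\<^sub>v p) $ c" if "c < n" for c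
    using that by (simp add: index_mult_mat_vec_blocks[OF G v] index_Gmat dimz_eq sum_negf Qp)
  have u_rows: "(?G *\<^sub>v v) $ (n+c) = (R *\<^sub>v subv v n m) $ c" if "c < m" for c
    using that R by (simp add: index_mult_mat_vec_blocks[OF G v] index_Gmat dimz_eq subv_def scalar_prod_def)
  have r0_rows: "(?G *\<^sub>v v) $ (n+m+c) = - (Q *\<^sub>v p) $ c" if "c < n" for c
    using that by (simp add: index_mult_mat_vec_blocks[OF G v] index_Gmat dimz_eq sum_negf Qp)
  have rest_rows: "(?G *\<^sub>v v) $ (n+m+n+c) = 0" if "c < N*n" for c
    using that by (simp add: index_mult_mat_vec_blocks[OF G v] index_Gmat dimz_eq)
  have Gv: "?G *\<^sub>v v \<in> carrier_vec (n + m + n + N*n)" using G v by simp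
  have "v \<bullet> (?G *\<^sub>v v) = (\<Sum>a\<in>{0..<n + m + n + N*n}. v $ a * (?G *\<^sub>v v) $ a)"
    unfolding scalar_prod_def carrier_vecD[OF Gv] ..
  also have "\<dots> = (\<Sum>c\<in>{0..<n}. v $ c * (Q *\<^sub>v p) $ c) + (\<Sum>c\<in>{0..<m}. v $ (n+c) * (R *\<^sub>v subv v n m) $ c)
      + (\<Sum>c\<in>{0..<n}. v $ (n+m+c) * (- (Q *\<^sub>v p) $ c))"
    unfolding sum_atLeast0_lessThan_add by (simp add: x_rows u_rows r0_rows rest_rows)
  also have "\<dots> = p \<bullet> (Q *\<^sub>v p) + subv v n m \<bullet> (R *\<^sub>v subv v n m)"
    using Q R by (simp add: scalar_prod_def p_def subv_def left_diff_distrib sum_subtractf sum_negf)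
  finally show ?thesis .
qed

lemma pos_semidef_Gmat:
  assumes Q: "pos_semidef n Q" and R: "pos_def m R"
  shows "pos_semidef (dimz n m N) (Gmat n m N Q R)"
proof -
  have Qc: "Q \<in> carrier_mat n n" and Rc: "R \<in> carrier_mat m m"
    using Q R by (auto simp: pos_semidef_def pos_def_def)
  have "symmetric_mat (Gmat n m N Q R)"
    using Q R by (intro symmetric_Gmat) (auto simp: pos_semidef_def pos_def_def)
  moreover have "v \<bullet> (Gmat n m N Q R *\<^sub>v v) \<ge> 0" if "v \<in> carrier_vec (dimz n m N)" for v
  proof -
    have v: "v \<in> carrier_vec (n + m + n + N*n)" using that by (simp add: dimz_eq)
    show ?thesis
      using quadratic_form_Gmat[OF v Qc Rc] Q pos_def_imp_pos_semidef[OF R]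
      by (simp add: pos_semidef_def subv_def)
  qed
  ultimately show ?thesis
    using Gmat_carrier by (simp add: pos_semidef_def)
qed

lemma subv_unit_vec:
  assumes "p < a \<or> a + k \<le> p" and "a + k \<le> D"
  shows "subv (unit_vec D p) a k = (0\<^sub>v k :: real vec)"
proof (rule eq_vecI)
  fix i assume "i < dim_vec (0\<^sub>v k :: real vec)"
  then have "a + i < D" "a + i \<noteq> p" using assms by auto
  then show "subv (unit_vec D p) a k $ i = 0\<^sub>v k $ i"
    using \<open>i < dim_vec (0\<^sub>v k)\<close> by (simp add: subv_def unit_vec_def)
qed (simp add: subv_def)

lemma Mmat_carrier: "Mmat n m N A B L \<in> carrier_mat (dimz n m N) (dimz n m N)"
  by (simp add: Mmat_def)

lemma Mmap_unit_vec_r0: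
  fixes A B L :: "real mat"
  assumes A: "A \<in> carrier_mat n n" and B: "B \<in> carrier_mat n m" and j: "j < n"
  shows "Mmap n m N A B L (unit_vec (dimz n m N) (n + m + j)) = 0\<^sub>v (dimz n m N)"
proof -
  let ?z = "unit_vec (dimz n m N) (n + m + j) :: real vec"
  have r: "subv ?z (n + m + l * n) n = 0\<^sub>v n" if "1 \<le> l" "l \<le> N" for l
  proof (rule subv_unit_vec)
    have "n \<le> l * n" using that by simp
    then show "n + m + j < n + m + l * n \<or> n + m + l * n + n \<le> n + m + j"
      using j by linarith
    have "l * n \<le> N * n" using that by simp
    then show "n + m + l * n + n \<le> dimz n m N"
      by (simp add: dimz_eq)
  qed
  have x: "subv ?z 0 n = 0\<^sub>v n" and u: "subv ?z n m = 0\<^sub>v m"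
    by (rule subv_unit_vec; simp add: dimz_eq)+
  have y: "A *\<^sub>v 0\<^sub>v n + B *\<^sub>v 0\<^sub>v m = 0\<^sub>v n"
    using A B by (simp add: mult_mat_vec_zero_vec)
  have w: "vec m (\<lambda>i. (Lblk n m L 0 *\<^sub>v 0\<^sub>v n) $ i
      + (\<Sum>k\<in>{1..<N}. (Lblk n m L k *\<^sub>v subv ?z (n + m + Suc k * n) n) $ i)) = 0\<^sub>v m"
  proof (intro eq_vecI)
    fix i assume "i < dim_vec (0\<^sub>v m :: real vec)"
    then have i: "i < m" by simp
    have "(Lblk n m L k *\<^sub>v subv ?z (n + m + Suc k * n) n) $ i = 0" if "k \<in> {1..<N}" for k
      using that i r[of "Suc k"] by (simp add: Lblk_def)
    then show "vec m (\<lambda>i. (Lblk n m L 0 *\<^sub>v 0\<^sub>v n) $ i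
      + (\<Sum>k\<in>{1..<N}. (Lblk n m L k *\<^sub>v subv ?z (n + m + Suc k * n) n) $ i)) $ i = 0\<^sub>v m $ i"
      using i by (simp add: Lblk_def mult_mat_vec_zero_vec)
  qed simp
  have rs: "map (\<lambda>l. subv ?z (n + m + l * n) n) [1..<N+1] = map (\<lambda>_. 0\<^sub>v n) [1..<N+1]"
    by (rule map_cong) (auto simp: r)
  have "n + (m + (N * n + n)) = dimz n m N"
    by (simp add: dimz_def)
  then show ?thesis
    unfolding Mmap_def Let_def x u y w rs concat_vecs_zero length_map length_upt
    by (simp add: append_zero_vec)
qed

lemma col_Mmat_r0:
  fixes A B L :: "real mat"
  assumes "A \<in> carrier_mat n n" and "B \<in> carrier_mat n m" and j: "j < n"
  shows "col (Mmat n m N A B L) (n + m + j) = 0\<^sub>v (dimz n m N)"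
proof (rule eq_vecI)
  fix a assume "a < dim_vec (0\<^sub>v (dimz n m N) :: real vec)"
  moreover have "n + m + j < dimz n m N" using j by (simp add: dimz_eq)
  ultimately show "col (Mmat n m N A B L) (n + m + j) $ a = 0\<^sub>v (dimz n m N) $ a"
    by (simp add: Mmat_def Mmap_unit_vec_r0[OF assms])
qed (simp add: Mmat_def)

lemma Hseq_carrier: "Hseq n m N A B Q R \<gamma> i \<in> carrier_mat (dimz n m N) (dimz n m N)"
proof (induction i)
  case (Suc i)
  let ?M = "Mmat n m N A B (Lgain n m N (Hseq n m N A B Q R \<gamma> i))"
  have "transpose_mat ?M * Hseq n m N A B Q R \<gamma> i * ?M \<in> carrier_mat (dimz n m N) (dimz n m N)"
    using Suc Mmat_carrier by (meson mult_carrier_mat transpose_carrier_mat)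
  then show ?case by (simp add: Let_def)
qed simp

lemma pos_semidef_Hseq:
  assumes "pos_semidef n Q" and "pos_def m R" and "0 \<le> \<gamma>"
  shows "pos_semidef (dimz n m N) (Hseq n m N A B Q R \<gamma> i)"
proof (induction i)
  case 0
  show ?case
    by (simp add: pos_semidef_def symmetric_mat_def zero_mat_mult_vec)
next
  case (Suc i)
  then show ?case
    using pos_semidef_add_smult[OF pos_semidef_Gmat[OF assms(1,2)]
        pos_semidef_congruence[OF Suc Mmat_carrier] assms(3)]
    by (simp add: Let_def)
qed

lemma Hseq_Suc_u_r0_block:
  fixes A B :: "real mat"
  assumes "A \<in> carrier_mat n n" and "B \<in> carrier_mat n m" and k: "k < m" and j: "j < n"
  shows "Hseq n m N A B Q R \<gamma> (Suc i) $$ (n + k, n + m + j) = 0"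
proof -
  define H where "H = Hseq n m N A B Q R \<gamma> i"
  define M where "M = Mmat n m N A B (Lgain n m N H)"
  have M: "M \<in> carrier_mat (dimz n m N) (dimz n m N)" unfolding M_def by (rule Mmat_carrier)
  have H: "H \<in> carrier_mat (dimz n m N) (dimz n m N)"
    unfolding H_def by (rule Hseq_carrier)
  have in_range: "n + k < dimz n m N" "n + m + j < dimz n m N" using k j by (simp_all add: dimz_eq)
  have "(transpose_mat M * H * M) $$ (n + k, n + m + j) = row (transpose_mat M * H) (n + k) \<bullet> col M (n + m + j)"
    by (rule index_mult_mat(1)) (use M H in_range in simp_all)
  also have "\<dots> = 0"
    unfolding M_def col_Mmat_r0[OF assms(1,2) j]
    by (rule scalar_prod_right_zero) (use M H in_range in \<open>simp add: M_def\<close>)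
  finally show ?thesis
    using M H in_range by (simp add: H_def[symmetric] M_def[symmetric] Let_def Gmat_carrier Gmat_u_r0_block k j)
qed

lemma pos_def_huu_Hseq_Suc:
  fixes A B Q R :: "real mat"
  assumes Q: "pos_semidef n Q" and R: "pos_def m R" and \<gamma>: "0 \<le> \<gamma>"
  shows "pos_def m (huu n m (Hseq n m N A B Q R \<gamma> (Suc i)))"
proof -
  define G where "G = Gmat n m N Q R"
  define H where "H = Hseq n m N A B Q R \<gamma> i"
  define K where "K = transpose_mat (Mmat n m N A B (Lgain n m N H)) * H * Mmat n m N A B (Lgain n m N H)"
  have Suc: "Hseq n m N A B Q R \<gamma> (Suc i) = G + \<gamma> \<cdot>\<^sub>m K"
    by (simp add: G_def H_def K_def Let_def)
  have K: "pos_semidef (dimz n m N) K"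
    unfolding K_def H_def by (rule pos_semidef_congruence[OF pos_semidef_Hseq[OF Q R \<gamma>] Mmat_carrier])
  have dim: "dimz n m N = n + m + (n + N*n)" by (simp add: dimz_eq)
  have Gc: "G \<in> carrier_mat (n + m + (n + N*n)) (n + m + (n + N*n))"
    using Gmat_carrier[of n m N Q R] unfolding G_def dim .
  have Kc: "K \<in> carrier_mat (n + m + (n + N*n)) (n + m + (n + N*n))"
    using K unfolding pos_semidef_def dim by simp
  have GKc: "G + \<gamma> \<cdot>\<^sub>m K \<in> carrier_mat (n + m + (n + N*n)) (n + m + (n + N*n))"
    using Kc by simp
  have Rc: "R \<in> carrier_mat m m" using R by (simp add: pos_def_def)
  have "symmetric_mat (huu n m (G + \<gamma> \<cdot>\<^sub>m K))"
    using pos_semidef_Hseq[OF Q R \<gamma>, of N A B "Suc i"] Gc Kc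
    unfolding Suc pos_semidef_def dim by (intro symmetric_huu) auto
  moreover have "e \<bullet> (huu n m (G + \<gamma> \<cdot>\<^sub>m K) *\<^sub>v e) > 0"
    if e: "e \<in> carrier_vec m" and e_nz: "e \<noteq> 0\<^sub>v m" for e
  proof -
    let ?E = "0\<^sub>v n @\<^sub>v e @\<^sub>v 0\<^sub>v (n + N*n)"
    have E: "?E \<in> carrier_vec (n + m + (n + N*n))" using e by (simp add: add.assoc)
    have "e \<bullet> (R *\<^sub>v e) > 0" using R e e_nz by (simp add: pos_def_def)
    also have "e \<bullet> (R *\<^sub>v e) = ?E \<bullet> (G *\<^sub>v ?E)"
      using quadratic_form_zero_append_zero[OF Gc e] huu_Gmat[OF Rc] by (simp add: G_def)
    also have "\<dots> \<le> ?E \<bullet> (G *\<^sub>v ?E) + \<gamma> * (?E \<bullet> (K *\<^sub>v ?E))"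
      using K E \<gamma> unfolding pos_semidef_def dim by simp
    also have "\<dots> = e \<bullet> (huu n m (G + \<gamma> \<cdot>\<^sub>m K) *\<^sub>v e)"
      using quadratic_form_add_smult[OF Gc Kc E, of \<gamma>] quadratic_form_zero_append_zero[OF GKc e]
      by simp
    finally show ?thesis .
  qed
  ultimately show ?thesis
    unfolding Suc pos_def_def by (simp add: huu_carrier)
qed

theorem lemma5:
  fixes n m N :: nat and A B Q R :: "real mat" and \<gamma> :: real
    and i :: nat and x :: "real vec" and r :: "nat \<Rightarrow> real vec"
  assumes "A \<in> carrier_mat n n" and "B \<in> carrier_mat n m"
    and "pos_def m R" and "pos_semidef n Q"
    and "0 \<le> \<gamma>" and "\<gamma> < 1"
    and "i > 0"
    and "x \<in> carrier_vec n" and "\<forall>j\<le>N. r j \<in> carrier_vec n"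
  shows "let H = Hseq n m N A B Q R \<gamma> i;
             u = Lgain n m N H *\<^sub>v (x @\<^sub>v concat_vecs (map r [1..<N+1]));
             f = (\<lambda>v. 1/2 * ((x @\<^sub>v v @\<^sub>v concat_vecs (map r [0..<N+1]))
                    \<bullet> (H *\<^sub>v (x @\<^sub>v v @\<^sub>v concat_vecs (map r [0..<N+1])))))
         in u \<in> carrier_vec m \<and> (\<forall>v\<in>carrier_vec m. v \<noteq> u \<longrightarrow> f u < f v)"
proof -
  note A = assms(1) and B = assms(2) and R = assms(3) and Q = assms(4) and \<gamma> = assms(5)
    and x = assms(8) and r = assms(9)
  obtain i' where i: "i = Suc i'" using \<open>i > 0\<close> gr0_implies_Suc by blast
  define H where "H = Hseq n m N A B Q R \<gamma> i"
  define rs where "rs = concat_vecs (map r [1..<N+1])"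
  have "pos_semidef (dimz n m N) H"
    unfolding H_def by (rule pos_semidef_Hseq[OF Q R \<gamma>])
  then have Hc: "H \<in> carrier_mat (n + m + n + N*n) (n + m + n + N*n)" and sym: "symmetric_mat H"
    by (simp_all add: pos_semidef_def dimz_eq)
  have u_r0: "\<forall>k<m. \<forall>j<n. H $$ (n + k, n + m + j) = 0"
    unfolding H_def i using Hseq_Suc_u_r0_block[OF A B] by blast
  have pd: "pos_def m (huu n m H)"
    unfolding H_def i by (rule pos_def_huu_Hseq_Suc[OF Q R \<gamma>])
  have rs: "rs \<in> carrier_vec (N*n)"
    unfolding rs_def by (rule concat_vecs_map_upt_carrier[OF r])
  define u where "u = Lgain n m N H *\<^sub>v (x @\<^sub>v rs)"
  have u: "u \<in> carrier_vec m" and stationary: "huu n m H *\<^sub>v u = - (hrest n m N H *\<^sub>v (x @\<^sub>v rs))"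
    using Lgain_stationary[OF pd, of "x @\<^sub>v rs"] x rs by (simp_all add: u_def)
  have "r 0 \<in> carrier_vec n" using r by simp
  then show ?thesis
    unfolding Let_def H_def[symmetric] concat_vecs_map_upt_0 rs_def[symmetric] u_def[symmetric]
    using quadratic_form_strict_min_u_block[OF Hc sym u_r0 pd x _ rs u stationary] u by simp
qed

end
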